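(* There is an absolute constant $C>0$ such that for every $0<\delta\leq 1$ and every integer $d\geq 1$, every $n$-vertex trigraph $T$ with minimum degree at least $\delta n$ and VC-dimension at most $d$ has domination number $\gamma(T)\leq C\cdot\frac{d}{\delta}\ln\frac{2}{\delta}$.
   Context: A trigraph is $T=(V,E,R)$ where $V$ is a finite vertex set, $E$ (plain edges) and $R$ (red edges) are disjoint sets of unordered pairs of distinct vertices. For $v\in V$: $N(v)$ is the set of plain neighbours, $N[v]=N(v)\cup\{v\}$, $R(v)$ the set of red neighbours. The minimum degree is $\min_v|N(v)|$. A dominating set is a set $X$ such that every $y\in V$ lies in $N[x]\cup R(x)$ for some $x\in X$; $\gamma(T)$ is the minimum size of a dominating set. A set $X\subseteq V$ is shattered if there is a set $S$ of $2^{|X|}$ vertices, none having a red neighbour in $X$, such that for every $Y\subseteq X$ some $v_Y\in S$ has $N[v_Y]\cap X=Y$. The VC-dimension of $T$ is the largest size of a shattered set. *)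

theory Defs
  imports "HOL-Analysis.Analysis"
begin

record 'a trigraph =
  verts :: "'a set"
  plain :: "'a set set"
  red   :: "'a set set"

definition is_trigraph :: "'a trigraph \<Rightarrow> bool" where
  "is_trigraph T \<longleftrightarrow> finite (verts T)
     \<and> (\<forall>e \<in> plain T. \<exists>u v. e = {u, v} \<and> u \<noteq> v \<and> u \<in> verts T \<and> v \<in> verts T)
     \<and> (\<forall>e \<in> red T. \<exists>u v. e = {u, v} \<and> u \<noteq> v \<and> u \<in> verts T \<and> v \<in> verts T)
     \<and> plain T \<inter> red T = {}"

definition nbr :: "'a trigraph \<Rightarrow> 'a \<Rightarrow> 'a set" where
  "nbr T v = {u \<in> verts T. {u, v} \<in> plain T}"

definition cnbr :: "'a trigraph \<Rightarrow> 'a \<Rightarrow> 'a set" where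
  "cnbr T v = insert v (nbr T v)"

definition rnbr :: "'a trigraph \<Rightarrow> 'a \<Rightarrow> 'a set" where
  "rnbr T v = {u \<in> verts T. {u, v} \<in> red T}"

definition min_degree_ge :: "'a trigraph \<Rightarrow> real \<Rightarrow> bool" where
  "min_degree_ge T k \<longleftrightarrow> (\<forall>v \<in> verts T. real (card (nbr T v)) \<ge> k)"

definition dominating :: "'a trigraph \<Rightarrow> 'a set \<Rightarrow> bool" where
  "dominating T X \<longleftrightarrow> X \<subseteq> verts T \<and>
     (\<forall>y \<in> verts T. \<exists>x \<in> X. y \<in> cnbr T x \<union> rnbr T x)"

definition domination_number :: "'a trigraph \<Rightarrow> nat" where
  "domination_number T = (LEAST k. \<exists>X. dominating T X \<and> card X = k)"

definition shattered :: "'a trigraph \<Rightarrow> 'a set \<Rightarrow> bool" where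
  "shattered T X \<longleftrightarrow> X \<subseteq> verts T \<and>
     (\<exists>S \<subseteq> verts T. card S = 2 ^ card X
        \<and> (\<forall>v \<in> S. rnbr T v \<inter> X = {})
        \<and> (\<forall>Y \<subseteq> X. \<exists>v \<in> S. cnbr T v \<inter> X = Y))"

definition vc_dim_le :: "'a trigraph \<Rightarrow> nat \<Rightarrow> bool" where
  "vc_dim_le T d \<longleftrightarrow> (\<forall>X. shattered T X \<longrightarrow> card X \<le> d)"

end

theory Submission
  imports Defs
begin

text \<open>
  The proof is the double-sampling argument behind the \<open>\<epsilon>\<close>-net theorem of Haussler and
  Welzl, carried out by counting instead of probabilities.  Consider all \<open>n ^ (m + M)\<close> sequences
  \<open>z\<close> of \<open>m + M\<close> vertices.  If no \<open>m\<close> vertices dominate \<open>T\<close>, then for every \<open>m\<close>-set \<open>A\<close> of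
  positions some vertex \<open>y\<close> is not dominated by the entries of \<open>z\<close> on \<open>A\<close>, and since
  \<open>|N[y]| \<ge> \<delta> n\<close>, Chebyshev's inequality shows that for at least half of the choices of the
  other \<open>M\<close> entries at least \<open>k\<close> of them lie in \<open>N[y]\<close>.  Conversely, for a fixed \<open>z\<close> such a
  failing \<open>A\<close> is determined by the \<open>m + k\<close> positions \<open>D = A \<union> K\<close>, where \<open>K\<close> consists of \<open>k\<close>
  of these hits, together with the trace \<open>K\<close> of \<open>N[y]\<close> on \<open>D\<close>.  As \<open>y\<close> has no red neighbour
  among the entries on \<open>D\<close>, these traces form a set system shattering at most \<open>d\<close> positions,
  so by Sauer--Shelah there are at most \<open>\<Phi> = \<Sum>i\<le>d. (m+k choose i)\<close> of them.  Double counting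
  the pairs \<open>(z, A)\<close> gives \<open>(m+M choose m) \<le> 2 (m+M choose m+k) \<Phi>\<close>, which fails for
  \<open>m = 2M\<close>, \<open>M \<approx> 2k/\<delta>\<close> and \<open>k \<approx> d log(2/\<delta>)\<close>: each of the \<open>k\<close> extra positions costs a
  factor \<open>2\<close> in the first binomial coefficient.
\<close>

section \<open>Shattering and the Sauer--Shelah bound\<close>

definition shatters :: "'a set set \<Rightarrow> 'a set \<Rightarrow> bool" where
  "shatters F P \<longleftrightarrow> (\<forall>Q \<subseteq> P. \<exists>K\<in>F. K \<inter> P = Q)"

lemma shatters_image_Diff:
  assumes "x \<notin> P" "shatters ((\<lambda>K. K - {x}) ` F) P"
  shows "shatters F P"
  unfolding shatters_def
proof (intro allI impI)
  fix Q assume "Q \<subseteq> P"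
  then obtain K where "K \<in> F" "(K - {x}) \<inter> P = Q"
    using assms(2) unfolding shatters_def by blast
  then show "\<exists>K\<in>F. K \<inter> P = Q" using assms(1) by blast
qed

lemma shatters_insert:
  assumes "x \<notin> P" "shatters G P" "\<And>K. K \<in> G \<Longrightarrow> x \<notin> K \<and> K \<in> F \<and> insert x K \<in> F"
  shows "shatters F (insert x P)"
  unfolding shatters_def
proof (intro allI impI)
  fix Q assume Q: "Q \<subseteq> insert x P"
  have "Q - {x} \<subseteq> P" using Q by blast
  then obtain K where K: "K \<in> G" "K \<inter> P = Q - {x}"
    using assms(2) unfolding shatters_def by blast
  show "\<exists>K\<in>F. K \<inter> insert x P = Q"
  proof (cases "x \<in> Q")
    case True
    then have "insert x K \<inter> insert x P = Q" using K(2) by blast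
    then show ?thesis using assms(3)[OF K(1)] by blast
  next
    case False
    then have "K \<inter> insert x P = Q" using K(2) assms(3)[OF K(1)] by blast
    then show ?thesis using assms(3)[OF K(1)] by blast
  qed
qed

lemma card_split_at_element:
  assumes "x \<notin> D" "finite F" "F \<subseteq> Pow (insert x D)"
  shows "card F = card ((\<lambda>K. K - {x}) ` F) + card {K \<in> Pow D. K \<in> F \<and> insert x K \<in> F}"
proof -
  define avoid where "avoid = {K\<in>F. x \<notin> K}"
  define contain where "contain = {K\<in>F. x \<in> K}"
  have fin: "finite avoid" "finite contain" "finite ((\<lambda>K. K - {x}) ` contain)"
    using assms(2) unfolding avoid_def contain_def by auto
  have F: "F = avoid \<union> contain"
    unfolding avoid_def contain_def by auto
  have "card F = card avoid + card contain"
    unfolding F using fin by (intro card_Un_disjoint) (auto simp: avoid_def contain_def)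
  moreover have "card contain = card ((\<lambda>K. K - {x}) ` contain)"
    by (rule card_image[symmetric]) (auto simp: inj_on_def contain_def)
  moreover have "(\<lambda>K. K - {x}) ` avoid = avoid"
    unfolding avoid_def by auto
  then have image_F: "(\<lambda>K. K - {x}) ` F = avoid \<union> (\<lambda>K. K - {x}) ` contain"
    unfolding F image_Un by simp
  moreover have both: "{K \<in> Pow D. K \<in> F \<and> insert x K \<in> F} = avoid \<inter> (\<lambda>K. K - {x}) ` contain"
  proof (intro equalityI subsetI)
    fix K assume K: "K \<in> {K \<in> Pow D. K \<in> F \<and> insert x K \<in> F}"
    then have "x \<notin> K" using assms(1) by auto
    have "K \<in> (\<lambda>K. K - {x}) ` contain"
      by (rule image_eqI[of _ _ "insert x K"]) (use K \<open>x \<notin> K\<close> in \<open>auto simp: contain_def\<close>)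
    then show "K \<in> avoid \<inter> (\<lambda>K. K - {x}) ` contain"
      using K \<open>x \<notin> K\<close> unfolding avoid_def by blast
  next
    fix K assume K: "K \<in> avoid \<inter> (\<lambda>K. K - {x}) ` contain"
    then obtain K' where K': "K' \<in> F" "x \<in> K'" and K_eq: "K = K' - {x}"
      unfolding contain_def by blast
    have "K \<in> F" using K unfolding avoid_def by simp
    moreover have "insert x K = K'" using K' K_eq by auto
    moreover have "K \<subseteq> D" using K' K_eq assms(3) by auto
    ultimately show "K \<in> {K \<in> Pow D. K \<in> F \<and> insert x K \<in> F}"
      using K'(1) by simp
  qed
  ultimately show ?thesis
    unfolding image_F both using card_Un_Int[OF fin(1,3)] by linarith
qed

lemma card_shattered_insert_ge:
  assumes "finite D" "x \<notin> D"
  shows "card {P. P \<subseteq> D \<and> shatters ((\<lambda>K. K - {x}) ` F) P}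
           + card {P. P \<subseteq> D \<and> shatters {K \<in> Pow D. K \<in> F \<and> insert x K \<in> F} P}
         \<le> card {P. P \<subseteq> insert x D \<and> shatters F P}"
proof -
  let ?Removed = "{P. P \<subseteq> D \<and> shatters ((\<lambda>K. K - {x}) ` F) P}"
  let ?Both = "{P. P \<subseteq> D \<and> shatters {K \<in> Pow D. K \<in> F \<and> insert x K \<in> F} P}"
  let ?All = "{P. P \<subseteq> insert x D \<and> shatters F P}"
  have finS: "finite ?All" using assms(1) by simp
  have S0: "?Removed \<subseteq> ?All"
  proof
    fix P assume "P \<in> ?Removed"
    then have P: "P \<subseteq> D" "shatters ((\<lambda>K. K - {x}) ` F) P" by auto
    then have "x \<notin> P" using assms(2) by blast
    then have "shatters F P" using P(2) by (rule shatters_image_Diff)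
    then show "P \<in> ?All" using P(1) by blast
  qed
  have S1: "insert x ` ?Both \<subseteq> ?All"
  proof
    fix P' assume "P' \<in> insert x ` ?Both"
    then obtain P where P: "P \<subseteq> D" "shatters {K \<in> Pow D. K \<in> F \<and> insert x K \<in> F} P"
      and P': "P' = insert x P"
      by blast
    have "x \<notin> P" using P(1) assms(2) by blast
    then have "shatters F P'"
      unfolding P' by (rule shatters_insert[OF _ P(2)]) (use assms(2) in auto)
    then show "P' \<in> ?All" using P P' by blast
  qed
  have "inj_on (insert x) ?Both"
    by (rule inj_onI) (use assms(2) in \<open>auto simp: insert_ident\<close>)
  then have "card ?Removed + card ?Both = card (?Removed \<union> insert x ` ?Both)"
    by (subst card_Un_disjoint)
      (use finite_subset[OF S0 finS] finite_subset[OF S1 finS] assms(2) in \<open>auto simp: card_image\<close>)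
  also have "\<dots> \<le> card ?All"
    using S0 S1 finS by (intro card_mono) auto
  finally show ?thesis .
qed

lemma card_le_card_shattered:
  assumes "finite D" "F \<subseteq> Pow D"
  shows "card F \<le> card {P. P \<subseteq> D \<and> shatters F P}"
  using assms
proof (induction D arbitrary: F rule: finite_induct)
  case empty
  then have "F = {} \<or> F = {{}}" by (simp add: subset_singleton_iff)
  then show ?case
  proof
    assume F: "F = {{}}"
    then have "{P. P \<subseteq> {} \<and> shatters F P} = {{}}"
      by (auto simp: shatters_def)
    then show ?thesis using F by simp
  qed simp
next
  case (insert x D)
  have "finite F"
    by (rule finite_subset[OF insert.prems]) (simp add: insert.hyps(1))
  then have "card F = card ((\<lambda>K. K - {x}) ` F) + card {K \<in> Pow D. K \<in> F \<and> insert x K \<in> F}"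
    using card_split_at_element[OF insert.hyps(2) _ insert.prems] by blast
  also have "\<dots> \<le> card {P. P \<subseteq> D \<and> shatters ((\<lambda>K. K - {x}) ` F) P}
                + card {P. P \<subseteq> D \<and> shatters {K \<in> Pow D. K \<in> F \<and> insert x K \<in> F} P}"
    using insert.prems by (intro add_mono insert.IH) auto
  also have "\<dots> \<le> card {P. P \<subseteq> insert x D \<and> shatters F P}"
    by (rule card_shattered_insert_ge[OF insert.hyps])
  finally show ?case .
qed

lemma card_subsets_card_le:
  assumes "finite D"
  shows "card {P. P \<subseteq> D \<and> card P \<le> d} \<le> (\<Sum>i\<le>d. card D choose i)"
proof -
  have "{P. P \<subseteq> D \<and> card P \<le> d} = (\<Union>i\<le>d. {P. P \<subseteq> D \<and> card P = i})" by auto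
  then have "card {P. P \<subseteq> D \<and> card P \<le> d} \<le> (\<Sum>i\<le>d. card {P. P \<subseteq> D \<and> card P = i})"
    using card_UN_le[OF finite_atMost[of d], of "\<lambda>i. {P. P \<subseteq> D \<and> card P = i}"] by simp
  then show ?thesis using n_subsets[OF assms] by simp
qed

lemma sauer_shelah:
  assumes "finite D" "F \<subseteq> Pow D" "\<And>P. P \<subseteq> D \<Longrightarrow> shatters F P \<Longrightarrow> card P \<le> d"
  shows "card F \<le> (\<Sum>i\<le>d. card D choose i)"
proof -
  have "card F \<le> card {P. P \<subseteq> D \<and> shatters F P}"
    by (rule card_le_card_shattered[OF assms(1,2)])
  also have "\<dots> \<le> card {P. P \<subseteq> D \<and> card P \<le> d}"
    using assms by (intro card_mono) auto
  also have "\<dots> \<le> (\<Sum>i\<le>d. card D choose i)"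
    by (rule card_subsets_card_le[OF assms(1)])
  finally show ?thesis .
qed

lemma sum_binomial_le_exp_pow:
  assumes "1 \<le> d" "d \<le> L"
  shows "real (\<Sum>i\<le>d. L choose i) \<le> (exp 1 * real L / real d) ^ d"
proof -
  define x where "x = real d / real L"
  have x: "0 < x" "x \<le> 1" using assms unfolding x_def by auto
  have "x ^ d * real (\<Sum>i\<le>d. L choose i) = (\<Sum>i\<le>d. real (L choose i) * x ^ d)"
    by (simp add: sum_distrib_left mult.commute)
  also have "\<dots> \<le> (\<Sum>i\<le>d. real (L choose i) * x ^ i)"
    using x by (intro sum_mono mult_left_mono power_decreasing) auto
  also have "\<dots> \<le> (\<Sum>i\<le>L. real (L choose i) * x ^ i)"
    using assms x by (intro sum_mono2) auto
  also have "\<dots> = (1 + x) ^ L"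
    using binomial_ring[of x 1 L] by (simp add: add.commute)
  also have "\<dots> \<le> exp x ^ L"
    using x by (intro power_mono) auto
  also have "\<dots> = exp 1 ^ d"
    using assms unfolding x_def by (simp add: exp_of_nat_mult[symmetric])
  finally have "x ^ d * real (\<Sum>i\<le>d. L choose i) \<le> exp 1 ^ d" .
  then have "real (\<Sum>i\<le>d. L choose i) \<le> exp 1 ^ d / x ^ d"
    using x by (simp add: field_simps)
  also have "\<dots> = (exp 1 * real L / real d) ^ d"
    unfolding x_def using assms by (simp add: power_divide power_mult_distrib)
  finally show ?thesis .
qed

section \<open>Binomial estimates\<close>

lemma two_binomial_Suc_le:
  assumes "2 * (n - j) \<le> Suc j"
  shows "2 * (n choose Suc j) \<le> n choose j"
proof -
  have "Suc j * (2 * (n choose Suc j)) = 2 * (n - j) * (n choose j)"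
    using binomial_absorb_comp[of n j] binomial_absorption[of j n] by simp
  also have "\<dots> \<le> Suc j * (n choose j)"
    using assms by (rule mult_le_mono1)
  finally show ?thesis
    by (simp only: mult_le_cancel1)
qed

lemma pow2_binomial_le:
  assumes "k \<le> M"
  shows "2 ^ k * (3 * M choose (2 * M + k)) \<le> 3 * M choose (2 * M)"
  using assms
proof (induction k)
  case (Suc k)
  have "2 * (3 * M choose Suc (2 * M + k)) \<le> 3 * M choose (2 * M + k)"
    using Suc.prems by (intro two_binomial_Suc_le) simp
  then have "2 ^ Suc k * (3 * M choose Suc (2 * M + k)) \<le> 2 ^ k * (3 * M choose (2 * M + k))"
    by simp
  also have "\<dots> \<le> 3 * M choose (2 * M)"
    using Suc by simp
  finally show ?case by simp
qed simp

lemma twice_binomial_mult_lt: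
  assumes "k \<le> M" "2 * \<Phi> < 2 ^ k"
  shows "2 * (3 * M choose (2 * M + k)) * \<Phi> < 3 * M choose (2 * M)"
proof (cases "3 * M choose (2 * M + k) = 0")
  case False
  then have "(3 * M choose (2 * M + k)) * (2 * \<Phi>) < (3 * M choose (2 * M + k)) * 2 ^ k"
    using assms(2) by simp
  also have "\<dots> \<le> 3 * M choose (2 * M)"
    using pow2_binomial_le[OF assms(1)] by (simp add: mult.commute)
  finally show ?thesis by (simp add: mult_ac)
qed (use assms(1) in simp)

section \<open>Second moment of the number of hits\<close>

lemma card_PiE_all_in:
  assumes B: "finite B" and J: "J \<subseteq> B" and S: "S \<subseteq> V"
  shows "card {w \<in> PiE B (\<lambda>_. V). \<forall>l\<in>J. w l \<in> S} = card S ^ card J * card V ^ card (B - J)"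
proof -
  have "{w \<in> PiE B (\<lambda>_. V). \<forall>l\<in>J. w l \<in> S} = PiE B (\<lambda>l. if l \<in> J then S else V)"
  proof (intro equalityI subsetI)
    fix w assume "w \<in> {w \<in> PiE B (\<lambda>_. V). \<forall>l\<in>J. w l \<in> S}"
    then show "w \<in> PiE B (\<lambda>l. if l \<in> J then S else V)" by (auto simp: PiE_iff)
  next
    fix w assume "w \<in> PiE B (\<lambda>l. if l \<in> J then S else V)"
    then have "\<forall>l\<in>B. w l \<in> (if l \<in> J then S else V)" "w \<in> extensional B"
      by (auto simp: PiE_iff)
    then show "w \<in> {w \<in> PiE B (\<lambda>_. V). \<forall>l\<in>J. w l \<in> S}"
      using J S by (auto simp: PiE_iff split: if_splits)
  qed
  then have "card {w \<in> PiE B (\<lambda>_. V). \<forall>l\<in>J. w l \<in> S} = (\<Prod>l\<in>B. card (if l \<in> J then S else V))"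
    using card_PiE[OF B] by simp
  also have "\<dots> = (\<Prod>l\<in>J. card S) * (\<Prod>l\<in>B - J. card V)"
    using prod.If_cases[OF B, of "\<lambda>l. l \<in> J" "\<lambda>_. card S" "\<lambda>_. card V"] J
    by (simp add: if_distrib Int_absorb1 Diff_eq)
  finally show ?thesis by simp
qed

lemma sum_PiE_of_bool_all_in:
  assumes B: "finite B" and J: "J \<subseteq> B" and S: "S \<subseteq> V" and V: "V \<noteq> {}" "finite V"
  shows "(\<Sum>w\<in>PiE B (\<lambda>_. V). of_bool (\<forall>l\<in>J. w l \<in> S))
           = real (card V) ^ card B * (real (card S) / real (card V)) ^ card J"
proof -
  have cB: "card B = card J + card (B - J)"
    using J B by (simp add: card_Diff_subset card_mono finite_subset)
  have "(\<Sum>w\<in>PiE B (\<lambda>_. V). of_bool (\<forall>l\<in>J. w l \<in> S))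
          = real (card {w \<in> PiE B (\<lambda>_. V). \<forall>l\<in>J. w l \<in> S})"
    using B V by (simp add: finite_PiE Int_def)
  also have "\<dots> = real (card S) ^ card J * real (card V) ^ card (B - J)"
    by (simp add: card_PiE_all_in[OF B J S])
  also have "\<dots> = real (card V) ^ card B * (real (card S) / real (card V)) ^ card J"
    using V unfolding cB by (simp add: power_add power_divide field_simps)
  finally show ?thesis .
qed

lemma real_card_filter_eq_sum_of_bool:
  "finite B \<Longrightarrow> real (card {i\<in>B. P i}) = (\<Sum>i\<in>B. of_bool (P i))"
  by (simp add: Int_def)

lemma sum_PiE_hits:
  fixes S V :: "'a set" and B :: "'b set"
  assumes B: "finite B" and S: "S \<subseteq> V" and V: "V \<noteq> {}" "finite V"
  defines "q \<equiv> real (card V) ^ card B" and "p \<equiv> real (card S) / real (card V)"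
  shows "(\<Sum>w\<in>PiE B (\<lambda>_. V). real (card {i\<in>B. w i \<in> S})) = real (card B) * q * p"
proof -
  have "(\<Sum>w\<in>PiE B (\<lambda>_. V). real (card {i\<in>B. w i \<in> S}))
          = (\<Sum>i\<in>B. \<Sum>w\<in>PiE B (\<lambda>_. V). of_bool (w i \<in> S))"
    unfolding real_card_filter_eq_sum_of_bool[OF B] by (rule sum.swap)
  also have "\<dots> = (\<Sum>i\<in>B. q * p)"
  proof (intro sum.cong refl)
    fix i assume "i \<in> B"
    then show "(\<Sum>w\<in>PiE B (\<lambda>_. V). of_bool (w i \<in> S)) = q * p"
      using sum_PiE_of_bool_all_in[OF B _ S V, of "{i}"] unfolding q_def p_def by simp
  qed
  finally show ?thesis by simp
qed

lemma sum_PiE_hits_squared: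
  fixes S V :: "'a set" and B :: "'b set"
  assumes B: "finite B" and S: "S \<subseteq> V" and V: "V \<noteq> {}" "finite V"
  defines "q \<equiv> real (card V) ^ card B" and "p \<equiv> real (card S) / real (card V)"
  shows "(\<Sum>w\<in>PiE B (\<lambda>_. V). (real (card {i\<in>B. w i \<in> S}))\<^sup>2)
           = real (card B) * q * p + real (card B) * (real (card B) - 1) * q * p\<^sup>2"
proof -
  define W where "W = PiE B (\<lambda>_. V)"
  have pair: "(\<Sum>w\<in>W. of_bool (w i \<in> S) * of_bool (w j \<in> S)) = q * p ^ card {i, j}"
    if "i \<in> B" "j \<in> B" for i j
    using sum_PiE_of_bool_all_in[OF B _ S V, of "{i, j}"] that
    unfolding W_def q_def p_def by (simp add: of_bool_conj)
  have "(\<Sum>w\<in>W. (real (card {i\<in>B. w i \<in> S}))\<^sup>2)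
          = (\<Sum>i\<in>B. \<Sum>j\<in>B. \<Sum>w\<in>W. of_bool (w i \<in> S) * of_bool (w j \<in> S))"
    unfolding real_card_filter_eq_sum_of_bool[OF B] power2_eq_square sum_product sum.swap[of _ W] ..
  also have "\<dots> = (\<Sum>i\<in>B. q * p + (real (card B) - 1) * (q * p\<^sup>2))"
  proof (intro sum.cong refl)
    fix i assume i: "i \<in> B"
    have "(\<Sum>j\<in>B. \<Sum>w\<in>W. of_bool (w i \<in> S) * of_bool (w j \<in> S))
            = q * p + (\<Sum>j\<in>B - {i}. q * p ^ card {i, j})"
      using B i pair by (simp add: sum.remove[of B i])
    also have "(\<Sum>j\<in>B - {i}. q * p ^ card {i, j}) = (\<Sum>j\<in>B - {i}. q * p\<^sup>2)"
      by (intro sum.cong) (auto simp: power2_eq_square)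
    also have "\<dots> = (real (card B) - 1) * (q * p\<^sup>2)"
    proof -
      have "1 \<le> card B" using B i by (metis One_nat_def Suc_leI card_gt_0_iff empty_iff)
      then show ?thesis using B i by (simp add: of_nat_diff)
    qed
    finally show "(\<Sum>j\<in>B. \<Sum>w\<in>W. of_bool (w i \<in> S) * of_bool (w j \<in> S))
                    = q * p + (real (card B) - 1) * (q * p\<^sup>2)" .
  qed
  finally show ?thesis unfolding W_def by (simp add: algebra_simps)
qed

text \<open>The bound \<open>Var X \<le> E X\<close> for the number \<open>X\<close> of coordinates of a uniform random
  \<open>w \<in> V\<^sup>B\<close> that lie in \<open>S\<close>, with both sides multiplied by the number \<open>q\<close> of samples.\<close>

lemma sum_PiE_hits_deviation_le:
  fixes S V :: "'a set" and B :: "'b set"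
  assumes B: "finite B" and S: "S \<subseteq> V" and V: "V \<noteq> {}" "finite V"
  defines "q \<equiv> real (card V) ^ card B" and "p \<equiv> real (card S) / real (card V)"
  shows "(\<Sum>w\<in>PiE B (\<lambda>_. V). (real (card {i\<in>B. w i \<in> S}) - real (card B) * p)\<^sup>2)
           \<le> q * (real (card B) * p)"
proof -
  define W where "W = PiE B (\<lambda>_. V)"
  define X where "X w = real (card {i\<in>B. w i \<in> S})" for w
  define M where "M = real (card B)"
  have "(\<Sum>w\<in>W. (X w - M * p)\<^sup>2)
          = (\<Sum>w\<in>W. (X w)\<^sup>2) - (\<Sum>w\<in>W. 2 * M * p * X w) + (\<Sum>w\<in>W. (M * p)\<^sup>2)"
    by (simp add: power2_diff sum.distrib sum_subtractf mult_ac)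
  also have "\<dots> = (\<Sum>w\<in>W. (X w)\<^sup>2) - 2 * M * p * (\<Sum>w\<in>W. X w) + real (card W) * (M * p)\<^sup>2"
    by (simp add: sum_distrib_left)
  also have "\<dots> = q * M * p - q * M * p\<^sup>2"
    using sum_PiE_hits[OF B S V] sum_PiE_hits_squared[OF B S V] B
    unfolding W_def X_def M_def q_def p_def by (simp add: card_PiE power2_eq_square algebra_simps)
  also have "\<dots> \<le> q * (M * p)"
    by (simp add: M_def q_def)
  finally show ?thesis unfolding W_def X_def M_def .
qed

lemma card_PiE_many_hits:
  fixes S V :: "'a set" and B :: "'b set"
  assumes B: "finite B" and S: "S \<subseteq> V" and V: "V \<noteq> {}" "finite V"
    and dense: "\<delta> * real (card V) \<le> real (card S)"
    and large: "8 \<le> \<delta> * real (card B)" and k: "real k \<le> \<delta> * real (card B) / 2"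
  shows "real (card V) ^ card B / 2 \<le> real (card {w \<in> PiE B (\<lambda>_. V). k \<le> card {i\<in>B. w i \<in> S}})"
proof -
  define W where "W = PiE B (\<lambda>_. V)"
  define q where "q = real (card V) ^ card B"
  define p where "p = real (card S) / real (card V)"
  define \<mu> where "\<mu> = real (card B) * p"
  define X where "X w = real (card {i\<in>B. w i \<in> S})" for w
  define Bad where "Bad = {w\<in>W. X w < real k}"
  have finW: "finite W" unfolding W_def using B V by (simp add: finite_PiE)
  have "\<delta> \<le> p" unfolding p_def using dense V by (simp add: field_simps card_gt_0_iff)
  then have "\<delta> * real (card B) \<le> \<mu>" unfolding \<mu>_def by (simp add: mult_right_mono mult.commute)
  then have \<mu>8: "8 \<le> \<mu>" and k\<mu>: "real k \<le> \<mu> / 2" using large k by linarith+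
  text \<open>Chebyshev: every bad \<open>w\<close> deviates from the mean by at least \<open>\<mu>/2\<close>.\<close>
  have "real (card Bad) * (\<mu> / 2)\<^sup>2 = (\<Sum>w\<in>Bad. (\<mu> / 2)\<^sup>2)" by simp
  also have "\<dots> \<le> (\<Sum>w\<in>Bad. (X w - \<mu>)\<^sup>2)"
  proof (rule sum_mono)
    fix w assume "w \<in> Bad"
    then have "\<mu> / 2 \<le> \<mu> - X w" using k\<mu> unfolding Bad_def by simp
    then show "(\<mu> / 2)\<^sup>2 \<le> (X w - \<mu>)\<^sup>2" using \<mu>8 by (simp add: power2_commute power_mono)
  qed
  also have "\<dots> \<le> (\<Sum>w\<in>W. (X w - \<mu>)\<^sup>2)"
    using finW by (intro sum_mono2) (auto simp: Bad_def)
  also have "\<dots> \<le> q * \<mu>"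
    using sum_PiE_hits_deviation_le[OF B S V] unfolding W_def X_def \<mu>_def q_def p_def .
  finally have "real (card Bad) * \<mu> \<le> 4 * q"
    using \<mu>8 by (simp add: power2_eq_square field_simps)
  then have bad: "real (card Bad) \<le> q / 2"
    using \<mu>8 mult_left_mono[OF \<mu>8, of "real (card Bad)"] by linarith
  have "{w \<in> W. k \<le> card {i\<in>B. w i \<in> S}} = W - Bad"
    unfolding Bad_def X_def by auto
  moreover have "Bad \<subseteq> W" unfolding Bad_def by blast
  then have "real (card (W - Bad)) = real (card W) - real (card Bad)"
    using finW by (simp add: card_Diff_subset finite_subset card_mono of_nat_diff)
  moreover have "real (card W) = q"
    unfolding W_def q_def using B by (simp add: card_PiE)
  ultimately show ?thesis using bad unfolding W_def q_def by simp
qed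

section \<open>Traces of a trigraph on a sample\<close>

lemma cnbr_subset: "y \<in> verts T \<Longrightarrow> cnbr T y \<subseteq> verts T"
  unfolding cnbr_def nbr_def by blast

lemma nbr_subset_cnbr: "nbr T y \<subseteq> cnbr T y"
  unfolding cnbr_def by blast

lemma cnbr_commute: "x \<in> verts T \<Longrightarrow> y \<in> verts T \<Longrightarrow> y \<in> cnbr T x \<longleftrightarrow> x \<in> cnbr T y"
  unfolding cnbr_def nbr_def by (auto simp: insert_commute)

lemma rnbr_commute: "x \<in> verts T \<Longrightarrow> y \<in> verts T \<Longrightarrow> y \<in> rnbr T x \<longleftrightarrow> x \<in> rnbr T y"
  unfolding rnbr_def by (auto simp: insert_commute)

lemma cnbr_disjoint_rnbr:
  assumes "is_trigraph T"
  shows "cnbr T y \<inter> rnbr T y = {}"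
proof -
  have "{y} \<notin> red T"
  proof
    assume "{y} \<in> red T"
    then obtain u v where uv: "{y} = {u, v}" "u \<noteq> v"
      using assms unfolding is_trigraph_def by blast
    then have "u \<in> {y}" "v \<in> {y}" unfolding uv(1) by simp_all
    then show False using uv(2) by simp
  qed
  then have "y \<notin> rnbr T y" unfolding rnbr_def by simp
  moreover have "nbr T y \<inter> rnbr T y = {}"
    using assms unfolding is_trigraph_def nbr_def rnbr_def by blast
  ultimately show ?thesis unfolding cnbr_def by blast
qed

lemma shatteredI:
  assumes "X \<subseteq> verts T" "finite X"
    and "\<And>Y. Y \<subseteq> X \<Longrightarrow> \<exists>v\<in>verts T. rnbr T v \<inter> X = {} \<and> cnbr T v \<inter> X = Y"
  shows "shattered T X"
proof -
  define f where "f Y = (SOME v. v \<in> verts T \<and> rnbr T v \<inter> X = {} \<and> cnbr T v \<inter> X = Y)" for Y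
  have f: "f Y \<in> verts T \<and> rnbr T (f Y) \<inter> X = {} \<and> cnbr T (f Y) \<inter> X = Y" if "Y \<subseteq> X" for Y
    unfolding f_def using someI_ex[OF assms(3)[OF that, unfolded Bex_def]] .
  have "inj_on f (Pow X)"
    by (rule inj_onI) (metis PowD f)
  then have "card (f ` Pow X) = 2 ^ card X"
    by (simp add: card_image card_Pow assms(2))
  moreover have "\<forall>Y\<subseteq>X. \<exists>v\<in>f ` Pow X. cnbr T v \<inter> X = Y"
    using f by blast
  moreover have "f ` Pow X \<subseteq> verts T" "\<forall>v\<in>f ` Pow X. rnbr T v \<inter> X = {}"
    using f by auto
  ultimately show ?thesis
    unfolding shattered_def using assms(1) by blast
qed

definition sample_trace :: "'a trigraph \<Rightarrow> (nat \<Rightarrow> 'a) \<Rightarrow> nat set \<Rightarrow> nat set set" where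
  "sample_trace T z D =
     {{i\<in>D. z i \<in> cnbr T y} | y. y \<in> verts T \<and> (\<forall>i\<in>D. z i \<notin> rnbr T y)}"

lemma card_le_if_shatters_sample_trace:
  assumes vc: "vc_dim_le T d" and z: "\<forall>i\<in>D. z i \<in> verts T"
    and P: "P \<subseteq> D" "finite P" and shattering: "shatters (sample_trace T z D) P"
  shows "card P \<le> d"
proof -
  have realize: "\<exists>y\<in>verts T. (\<forall>i\<in>D. z i \<notin> rnbr T y) \<and> {i\<in>P. z i \<in> cnbr T y} = Q"
    if Q: "Q \<subseteq> P" for Q
  proof -
    obtain K where "K \<in> sample_trace T z D" "K \<inter> P = Q"
      using shattering[unfolded shatters_def, rule_format, OF Q] by blast
    then obtain y where y: "y \<in> verts T" "\<forall>i\<in>D. z i \<notin> rnbr T y" "K = {i\<in>D. z i \<in> cnbr T y}"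
      unfolding sample_trace_def by blast
    have "{i\<in>P. z i \<in> cnbr T y} = Q" using \<open>K \<inter> P = Q\<close> y(3) P(1) by blast
    then show ?thesis using y(1,2) by blast
  qed
  have inj: "inj_on z P"
  proof (rule inj_onI)
    fix i j assume ij: "i \<in> P" "j \<in> P" "z i = z j"
    obtain y where y: "{l\<in>P. z l \<in> cnbr T y} = {i}"
      using realize[of "{i}"] ij(1) by blast
    then have "i \<in> {l\<in>P. z l \<in> cnbr T y}" by simp
    then have "j \<in> {l\<in>P. z l \<in> cnbr T y}" using ij by simp
    then show "i = j" unfolding y by simp
  qed
  have "shattered T (z ` P)"
  proof (rule shatteredI)
    show "z ` P \<subseteq> verts T" "finite (z ` P)" using z P by auto
    fix Y assume Y: "Y \<subseteq> z ` P"
    obtain y where y: "y \<in> verts T" "\<forall>i\<in>D. z i \<notin> rnbr T y"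
        "{i\<in>P. z i \<in> cnbr T y} = {i\<in>P. z i \<in> Y}"
      using realize[of "{i\<in>P. z i \<in> Y}"] by blast
    have key: "z i \<in> cnbr T y \<longleftrightarrow> z i \<in> Y" if "i \<in> P" for i
    proof -
      have "i \<in> {i\<in>P. z i \<in> cnbr T y} \<longleftrightarrow> i \<in> {i\<in>P. z i \<in> Y}" unfolding y(3) ..
      then show ?thesis using that by simp
    qed
    have "cnbr T y \<inter> z ` P = Y" using Y by (auto simp: key)
    moreover have "rnbr T y \<inter> z ` P = {}" using y(2) P(1) by blast
    ultimately show "\<exists>v\<in>verts T. rnbr T v \<inter> z ` P = {} \<and> cnbr T v \<inter> z ` P = Y"
      using y(1) by blast
  qed
  then have "card (z ` P) \<le> d" using vc unfolding vc_dim_le_def by blast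
  then show ?thesis using card_image[OF inj] by simp
qed

lemma card_sample_trace_le:
  assumes "vc_dim_le T d" "\<forall>i\<in>D. z i \<in> verts T" "finite D"
  shows "card (sample_trace T z D) \<le> (\<Sum>i\<le>d. card D choose i)"
proof (rule sauer_shelah[OF assms(3)])
  show "sample_trace T z D \<subseteq> Pow D" unfolding sample_trace_def by blast
  show "card P \<le> d" if "P \<subseteq> D" "shatters (sample_trace T z D) P" for P
    using card_le_if_shatters_sample_trace[OF assms(1,2) that(1) _ that(2)]
      finite_subset[OF that(1) assms(3)] by blast
qed

lemma sample_trace_subset_Pow: "sample_trace T z D \<subseteq> Pow D"
  unfolding sample_trace_def by blast

definition sample_fails :: "'a trigraph \<Rightarrow> nat \<Rightarrow> (nat \<Rightarrow> 'a) \<Rightarrow> nat set \<Rightarrow> nat set \<Rightarrow> bool" where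
  "sample_fails T k z A B \<longleftrightarrow>
     (\<exists>y\<in>verts T. (\<forall>i\<in>A. y \<notin> cnbr T (z i) \<union> rnbr T (z i)) \<and> k \<le> card {i\<in>B. z i \<in> cnbr T y})"

text \<open>A failing first half \<open>A\<close> is recovered from the \<open>|A| + k\<close> positions \<open>A \<union> K\<close>
  together with the trace \<open>K\<close> of the undominated vertex on them.\<close>

lemma sample_fails_obtains_trace:
  assumes T: "is_trigraph T" and z: "\<forall>i\<in>A. z i \<in> verts T"
    and A: "finite A" "A \<inter> B = {}" and fails: "sample_fails T k z A B"
  obtains D K where "D \<subseteq> A \<union> B" "card D = card A + k" "K \<in> sample_trace T z D" "A = D - K"
proof -
  obtain y where y: "y \<in> verts T" and undominated: "\<forall>i\<in>A. y \<notin> cnbr T (z i) \<union> rnbr T (z i)"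
    and hits: "k \<le> card {i\<in>B. z i \<in> cnbr T y}"
    using fails unfolding sample_fails_def by blast
  obtain K where K: "K \<subseteq> {i\<in>B. z i \<in> cnbr T y}" "card K = k" "finite K"
    using obtain_subset_with_card_n[OF hits] by blast
  define D where "D = A \<union> K"
  have far: "z i \<notin> cnbr T y \<union> rnbr T y" if i: "i \<in> A" for i
  proof -
    have "y \<notin> cnbr T (z i)" "y \<notin> rnbr T (z i)" using undominated i by auto
    then show ?thesis
      using cnbr_commute[of "z i" T y] rnbr_commute[of "z i" T y] z i y by simp
  qed
  have near: "z i \<in> cnbr T y \<and> z i \<notin> rnbr T y" if "i \<in> K" for i
    using K that cnbr_disjoint_rnbr[OF T] by blast
  have "K = {i\<in>D. z i \<in> cnbr T y}"
    unfolding D_def using far near by auto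
  moreover have "\<forall>i\<in>D. z i \<notin> rnbr T y"
    unfolding D_def using far near by auto
  ultimately have "K \<in> sample_trace T z D"
    unfolding sample_trace_def using y by blast
  moreover have "A \<inter> K = {}" using A(2) K(1) by blast
  then have "card D = card A + k" "A = D - K"
    unfolding D_def using card_Un_disjoint[OF A(1) K(3)] K(2) by auto
  moreover have "D \<subseteq> A \<union> B" unfolding D_def using K(1) by blast
  ultimately show thesis using that by blast
qed

lemma card_failing_subsets_le:
  assumes T: "is_trigraph T" and vc: "vc_dim_le T d" and Pos: "finite Pos"
    and z: "\<forall>i\<in>Pos. z i \<in> verts T"
  shows "card {A. A \<subseteq> Pos \<and> card A = m \<and> sample_fails T k z A (Pos - A)}
           \<le> (card Pos choose (m + k)) * (\<Sum>i\<le>d. (m + k) choose i)"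
proof -
  define Ds where "Ds = {D. D \<subseteq> Pos \<and> card D = m + k}"
  have finDs: "finite Ds" unfolding Ds_def using Pos by simp
  have fin_trace: "finite (sample_trace T z D)" if "D \<in> Ds" for D
  proof -
    have "finite D" using that Pos finite_subset unfolding Ds_def by blast
    then have "finite (Pow D)" by simp
    then show ?thesis by (rule finite_subset[OF sample_trace_subset_Pow])
  qed
  have "{A. A \<subseteq> Pos \<and> card A = m \<and> sample_fails T k z A (Pos - A)}
          \<subseteq> (\<Union>D\<in>Ds. (\<lambda>K. D - K) ` sample_trace T z D)"
  proof
    fix A assume "A \<in> {A. A \<subseteq> Pos \<and> card A = m \<and> sample_fails T k z A (Pos - A)}"
    then have A: "A \<subseteq> Pos" "card A = m" "sample_fails T k z A (Pos - A)" by auto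
    have "finite A" using A(1) Pos finite_subset by blast
    then obtain D K where "D \<subseteq> A \<union> (Pos - A)" "card D = card A + k"
        "K \<in> sample_trace T z D" "A = D - K"
      using sample_fails_obtains_trace[OF T _ _ _ A(3)] z A(1) by blast
    then show "A \<in> (\<Union>D\<in>Ds. (\<lambda>K. D - K) ` sample_trace T z D)"
      unfolding Ds_def using A by blast
  qed
  then have "card {A. A \<subseteq> Pos \<and> card A = m \<and> sample_fails T k z A (Pos - A)}
               \<le> card (\<Union>D\<in>Ds. (\<lambda>K. D - K) ` sample_trace T z D)"
    using finDs fin_trace by (intro card_mono) auto
  also have "\<dots> \<le> (\<Sum>D\<in>Ds. card ((\<lambda>K. D - K) ` sample_trace T z D))"
    by (rule card_UN_le[OF finDs])
  also have "\<dots> \<le> (\<Sum>D\<in>Ds. card (sample_trace T z D))"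
    by (intro sum_mono card_image_le fin_trace)
  also have "\<dots> \<le> (\<Sum>D\<in>Ds. \<Sum>i\<le>d. (m + k) choose i)"
  proof (rule sum_mono)
    fix D assume "D \<in> Ds"
    then have "D \<subseteq> Pos" "card D = m + k" unfolding Ds_def by auto
    then show "card (sample_trace T z D) \<le> (\<Sum>i\<le>d. (m + k) choose i)"
      using card_sample_trace_le[OF vc _ finite_subset[OF _ Pos], of D z] z by auto
  qed
  also have "\<dots> = (card Pos choose (m + k)) * (\<Sum>i\<le>d. (m + k) choose i)"
    unfolding Ds_def using n_subsets[OF Pos] by simp
  finally show ?thesis .
qed

section \<open>Double counting\<close>

lemma inj_on_merge_PiE:
  assumes "I \<inter> J = {}"
  shows "inj_on (merge I J) (PiE I X \<times> PiE J Y)"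
proof (rule inj_onI, clarify)
  fix x y x' y' assume x: "x \<in> PiE I X" "x' \<in> PiE I X" and y: "y \<in> PiE J Y" "y' \<in> PiE J Y"
    and eq: "merge I J (x, y) = merge I J (x', y')"
  have "restrict x I = restrict x' I" "restrict y J = restrict y' J"
    using arg_cong[OF eq, of "\<lambda>f. restrict f I"] arg_cong[OF eq, of "\<lambda>f. restrict f J"] assms
    by simp_all
  then show "x = x' \<and> y = y'" using x y by simp
qed

lemma sum_card_le_card_merge:
  assumes IJ: "I \<inter> J = {}" and fin: "finite (PiE I X)" "\<And>u. finite (G u)" "finite R"
    and G: "\<And>u w. u \<in> PiE I X \<Longrightarrow> w \<in> G u \<Longrightarrow> w \<in> PiE J Y \<and> merge I J (u, w) \<in> R"
  shows "(\<Sum>u\<in>PiE I X. card (G u)) \<le> card R"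
proof -
  have "inj_on (merge I J) (Sigma (PiE I X) G)"
    by (rule inj_on_subset[OF inj_on_merge_PiE[OF IJ, of X Y]]) (use G in auto)
  then have "card (Sigma (PiE I X) G) = card (merge I J ` Sigma (PiE I X) G)"
    by (rule card_image[symmetric])
  also have "\<dots> \<le> card R"
    using G by (intro card_mono[OF fin(3)]) auto
  finally have "card (Sigma (PiE I X) G) \<le> card R" .
  then show ?thesis using fin(1,2) by (simp add: card_SigmaI)
qed

lemma exists_undominated_vertex:
  assumes "\<not> (\<exists>X. dominating T X \<and> card X \<le> card A)" "finite A" "u ` A \<subseteq> verts T"
  shows "\<exists>y\<in>verts T. \<forall>i\<in>A. y \<notin> cnbr T (u i) \<union> rnbr T (u i)"
proof -
  have "card (u ` A) \<le> card A" by (rule card_image_le[OF assms(2)])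
  then have "\<not> dominating T (u ` A)" using assms(1) by blast
  then show ?thesis using assms(3) unfolding dominating_def by blast
qed

lemma card_failing_samples_ge:
  fixes T :: "'a trigraph"
  assumes V: "finite (verts T)" "verts T \<noteq> {}"
    and mindeg: "min_degree_ge T (\<delta> * real (card (verts T)))"
    and no_dom: "\<not> (\<exists>X. dominating T X \<and> card X \<le> card A)"
    and AB: "finite A" "finite B" "A \<inter> B = {}"
    and large: "8 \<le> \<delta> * real (card B)" and k: "real k \<le> \<delta> * real (card B) / 2"
  shows "real (card (verts T)) ^ (card A + card B) / 2
           \<le> real (card {z \<in> PiE (A \<union> B) (\<lambda>_. verts T). sample_fails T k z A B})"
proof -
  let ?V = "verts T"
  let ?U = "PiE A (\<lambda>_. ?V)"
  have "\<forall>u\<in>?U. \<exists>y. y \<in> ?V \<and> (\<forall>i\<in>A. y \<notin> cnbr T (u i) \<union> rnbr T (u i))"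
    using exists_undominated_vertex[OF no_dom AB(1)] by (auto simp: PiE_iff Bex_def)
  from bchoice[OF this] obtain y
    where y: "\<forall>u\<in>?U. y u \<in> ?V \<and> (\<forall>i\<in>A. y u \<notin> cnbr T (u i) \<union> rnbr T (u i))"
    by blast
  define good where "good u = {w \<in> PiE B (\<lambda>_. ?V). k \<le> card {i\<in>B. w i \<in> cnbr T (y u)}}" for u
  have good: "real (card ?V) ^ card B / 2 \<le> real (card (good u))" if u: "u \<in> ?U" for u
  proof -
    have yV: "y u \<in> ?V" using y u by blast
    have "\<delta> * real (card ?V) \<le> real (card (nbr T (y u)))"
      using mindeg yV unfolding min_degree_ge_def by blast
    also have "\<dots> \<le> real (card (cnbr T (y u)))"
      using card_mono[OF finite_subset[OF cnbr_subset[OF yV] V(1)] nbr_subset_cnbr] by simp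
    finally show ?thesis
      unfolding good_def using card_PiE_many_hits[OF AB(2) cnbr_subset[OF yV] V(2,1) _ large k]
      by blast
  qed
  have merge_fails: "w \<in> PiE B (\<lambda>_. ?V) \<and>
      merge A B (u, w) \<in> {z \<in> PiE (A \<union> B) (\<lambda>_. ?V). sample_fails T k z A B}"
    if u: "u \<in> ?U" and w: "w \<in> good u" for u w
  proof -
    have w': "w \<in> PiE B (\<lambda>_. ?V)" using w unfolding good_def by blast
    have "sample_fails T k (merge A B (u, w)) A B"
      unfolding sample_fails_def
    proof (intro bexI[of _ "y u"] conjI)
      show "y u \<in> ?V" using y u by blast
      show "\<forall>i\<in>A. y u \<notin> cnbr T (merge A B (u, w) i) \<union> rnbr T (merge A B (u, w) i)"
        using y u AB(3) by auto
      have "{i\<in>B. merge A B (u, w) i \<in> cnbr T (y u)} = {i\<in>B. w i \<in> cnbr T (y u)}"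
        using AB(3) by auto
      then show "k \<le> card {i\<in>B. merge A B (u, w) i \<in> cnbr T (y u)}"
        using w unfolding good_def by simp
    qed
    then show ?thesis using u w' AB(3) by (auto simp: PiE_iff)
  qed
  have count: "(\<Sum>u\<in>?U. card (good u))
                 \<le> card {z \<in> PiE (A \<union> B) (\<lambda>_. ?V). sample_fails T k z A B}"
  proof (rule sum_card_le_card_merge[OF AB(3)])
    show "finite ?U" "finite (good u)" for u
      unfolding good_def using AB(1,2) V(1) by (simp_all add: finite_PiE)
    show "finite {z \<in> PiE (A \<union> B) (\<lambda>_. ?V). sample_fails T k z A B}"
      using AB(1,2) V(1) by (simp add: finite_PiE)
  qed (rule merge_fails)
  have "real (card ?V) ^ (card A + card B) / 2 = (\<Sum>u\<in>?U. real (card ?V) ^ card B / 2)"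
    using AB(1) by (simp add: card_PiE power_add)
  also have "\<dots> \<le> real (\<Sum>u\<in>?U. card (good u))"
    unfolding of_nat_sum by (rule sum_mono[OF good])
  also have "\<dots> \<le> real (card {z \<in> PiE (A \<union> B) (\<lambda>_. ?V). sample_fails T k z A B})"
    using count by (simp only: of_nat_le_iff)
  finally show ?thesis .
qed

lemma sum_card_Collect_swap:
  assumes "finite A" "finite B"
  shows "(\<Sum>a\<in>A. card {b\<in>B. R a b}) = (\<Sum>b\<in>B. card {a\<in>A. R a b})"
  using sum.swap_restrict[OF assms, of "\<lambda>_ _. 1::nat" R] by simp

lemma exists_small_dominating_set:
  fixes T :: "'a trigraph"
  assumes T: "is_trigraph T"
    and mindeg: "min_degree_ge T (\<delta> * real (card (verts T)))" and vc: "vc_dim_le T d"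
    and large: "8 \<le> \<delta> * real M" and k: "real k \<le> \<delta> * real M / 2"
    and ratio: "2 * ((m + M) choose (m + k)) * (\<Sum>i\<le>d. (m + k) choose i) < (m + M) choose m"
  shows "\<exists>X. dominating T X \<and> card X \<le> m"
proof (rule ccontr)
  assume no_dom: "\<not> (\<exists>X. dominating T X \<and> card X \<le> m)"
  have V: "verts T \<noteq> {}"
  proof
    assume "verts T = {}"
    then have "dominating T {}" unfolding dominating_def by simp
    then show False using no_dom by fastforce
  qed
  define n where "n = card (verts T)"
  define bound where "bound = ((m + M) choose (m + k)) * (\<Sum>i\<le>d. (m + k) choose i)"
  define Pos where "Pos = {..<m + M}"
  define Z where "Z = PiE Pos (\<lambda>_. verts T)"
  define As where "As = {A. A \<subseteq> Pos \<and> card A = m}"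
  define fails where "fails z A \<longleftrightarrow> sample_fails T k z A (Pos - A)" for z A
  have finV: "finite (verts T)" using T unfolding is_trigraph_def by blast
  have finZ: "finite Z" unfolding Z_def Pos_def using finV by (simp add: finite_PiE)
  have cZ: "card Z = n ^ (m + M)" unfolding Z_def Pos_def n_def by (simp add: card_PiE)
  have finAs: "finite As" unfolding As_def Pos_def by simp
  have upper: "card {A\<in>As. fails z A} \<le> bound" if "z \<in> Z" for z
    using card_failing_subsets_le[OF T vc, of Pos z m k] that
    unfolding Z_def As_def fails_def Pos_def bound_def by (simp add: PiE_iff conj_assoc)
  have "real ((m + M) choose m) * (real n ^ (m + M) / 2) = (\<Sum>A\<in>As. real n ^ (m + M) / 2)"
    unfolding As_def Pos_def using n_subsets[of "{..<m + M}" m] by simp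
  also have "\<dots> \<le> (\<Sum>A\<in>As. real (card {z\<in>Z. fails z A}))"
  proof (rule sum_mono)
    fix A assume "A \<in> As"
    then have A: "A \<subseteq> Pos" "card A = m" unfolding As_def by auto
    have finA: "finite A" using A(1) finite_subset unfolding Pos_def by blast
    have B: "card (Pos - A) = M" using A finA unfolding Pos_def by (simp add: card_Diff_subset)
    have AB: "A \<union> (Pos - A) = Pos" using A(1) by blast
    have "real n ^ (card A + card (Pos - A)) / 2
            \<le> real (card {z \<in> PiE (A \<union> (Pos - A)) (\<lambda>_. verts T). sample_fails T k z A (Pos - A)})"
      unfolding n_def
      by (rule card_failing_samples_ge[OF finV V mindeg])
        (use no_dom A finA large k B in \<open>auto simp: Pos_def\<close>)
    then show "real n ^ (m + M) / 2 \<le> real (card {z\<in>Z. fails z A})"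
      unfolding Z_def fails_def AB A(2) B .
  qed
  also have "\<dots> = real (\<Sum>z\<in>Z. card {A\<in>As. fails z A})"
    using sum_card_Collect_swap[OF finAs finZ, of "\<lambda>A z. fails z A"] by (simp flip: of_nat_sum)
  also have "\<dots> \<le> real (card Z * bound)"
  proof -
    have "(\<Sum>z\<in>Z. card {A\<in>As. fails z A}) \<le> card Z * bound"
      using upper sum_bounded_above[of Z "\<lambda>z. card {A\<in>As. fails z A}"] by simp
    then show ?thesis by (simp only: of_nat_le_iff)
  qed
  finally have "real ((m + M) choose m) * real n ^ (m + M) \<le> real (2 * bound) * real n ^ (m + M)"
    unfolding cZ by (simp add: algebra_simps)
  moreover have "0 < real n ^ (m + M)" unfolding n_def using V finV by (simp add: card_gt_0_iff)
  ultimately have "real ((m + M) choose m) \<le> real (2 * bound)"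
    by (rule mult_right_le_imp_le)
  then show False using ratio unfolding bound_def by (simp only: of_nat_le_iff mult.assoc)
qed

section \<open>Choice of the parameters\<close>

lemma fifty_mult_le_pow2: "9 \<le> a \<Longrightarrow> 50 * a \<le> (2::nat) ^ a"
  by (induction a rule: dec_induct) simp_all

lemma exists_pow2_ge:
  fixes \<delta> :: real
  assumes "0 < \<delta>" "\<delta> \<le> 1"
  obtains a :: nat where "9 \<le> a" "2 / \<delta> \<le> 2 ^ a" "real a \<le> 14 * ln (2 / \<delta>)"
proof
  define u where "u = ln (2 / \<delta>)"
  define a where "a = max 9 (nat \<lceil>3 * u / 2\<rceil>)"
  have "ln 2 \<le> u"
    unfolding u_def using assms by (subst ln_le_cancel_iff) (auto simp: field_simps)
  then have u: "2 / 3 \<le> u" using ln2_ge_two_thirds by linarith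
  show "9 \<le> a" unfolding a_def by simp
  have "u \<le> real a * (2 / 3)" unfolding a_def by linarith
  also have "\<dots> \<le> real a * ln 2" by (intro mult_left_mono ln2_ge_two_thirds) simp
  also have "\<dots> = ln (2 ^ a)" by (simp add: ln_realpow)
  finally show "2 / \<delta> \<le> 2 ^ a"
    unfolding u_def using assms by (subst (asm) ln_le_cancel_iff) auto
  show "real a \<le> 14 * u"
    unfolding a_def using u by linarith
qed

lemma twice_sum_binomial_lt_pow2:
  fixes \<delta> :: real
  assumes \<delta>: "0 < \<delta>" and d: "1 \<le> d" "d \<le> L" and a: "9 \<le> a" "2 / \<delta> \<le> 2 ^ a"
    and L: "real L \<le> 14 * real d * real a / \<delta>"
  shows "2 * (\<Sum>i\<le>d. L choose i) < (2::nat) ^ (2 * d * a)"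
proof -
  have base: "0 < 42 * real a / \<delta>" using a \<delta> by simp
  have "exp 1 * real L / real d \<le> 42 * real a / \<delta>"
  proof -
    have "exp 1 * real L \<le> 3 * (14 * real d * real a / \<delta>)"
      using exp_le L by (intro mult_mono) auto
    then show ?thesis using d by (simp add: field_simps)
  qed
  then have "(exp 1 * real L / real d) ^ d \<le> (42 * real a / \<delta>) ^ d"
    by (rule power_mono) simp
  then have binomials: "real (\<Sum>i\<le>d. L choose i) \<le> (42 * real a / \<delta>) ^ d"
    using sum_binomial_le_exp_pow[OF d] by linarith
  have "(2::real) ^ 1 \<le> 2 ^ d" by (rule power_increasing[OF d(1)]) simp
  then have "2 * real (\<Sum>i\<le>d. L choose i) \<le> 2 ^ d * (42 * real a / \<delta>) ^ d"
    using binomials base by (intro mult_mono) (auto simp: sum_nonneg)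
  also have "\<dots> = (84 * real a / \<delta>) ^ d" by (simp add: power_mult_distrib[symmetric])
  also have "\<dots> < (100 * real a / \<delta>) ^ d"
    using a \<delta> d by (intro power_strict_mono) (auto simp: divide_strict_right_mono)
  also have "100 * real a / \<delta> \<le> 2 ^ a * 2 ^ a"
  proof -
    have "real (50 * a) \<le> real (2 ^ a)"
      using fifty_mult_le_pow2[OF a(1)] by (simp only: of_nat_le_iff)
    then have "50 * real a \<le> 2 ^ a" by simp
    have "100 * real a / \<delta> = (50 * real a) * (2 / \<delta>)" by simp
    also have "\<dots> \<le> 2 ^ a * 2 ^ a"
      using a \<delta> \<open>50 * real a \<le> 2 ^ a\<close> by (intro mult_mono) auto
    finally show ?thesis .
  qed
  then have "(100 * real a / \<delta>) ^ d \<le> (2 ^ a * 2 ^ a) ^ d"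
    using a \<delta> by (intro power_mono) auto
  also have "\<dots> = 2 ^ (2 * d * a)" by (simp add: power_mult[symmetric] power_add[symmetric] mult_2 mult.commute)
  finally have "real (2 * (\<Sum>i\<le>d. L choose i)) < real ((2::nat) ^ (2 * d * a))" by simp
  then show ?thesis by (simp only: of_nat_less_iff)
qed

lemma dominating_parameters:
  fixes \<delta> :: real
  assumes \<delta>: "0 < \<delta>" "\<delta> \<le> 1" and d: "1 \<le> d"
  obtains m M k :: nat where "8 \<le> \<delta> * real M" "real k \<le> \<delta> * real M / 2"
    "2 * ((m + M) choose (m + k)) * (\<Sum>i\<le>d. (m + k) choose i) < (m + M) choose m"
    "real m \<le> 168 * (real d / \<delta>) * ln (2 / \<delta>)"
proof -
  obtain a where a: "9 \<le> a" "2 / \<delta> \<le> 2 ^ a" "real a \<le> 14 * ln (2 / \<delta>)"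
    using exists_pow2_ge[OF \<delta>] .
  define k where "k = 2 * d * a"
  define \<kappa> where "\<kappa> = real k / \<delta>"
  define M where "M = nat \<lceil>2 * \<kappa>\<rceil>"
  have k: "1 \<le> k" "d \<le> k" unfolding k_def using a d by simp_all
  have k_\<kappa>: "real k \<le> \<kappa>" unfolding \<kappa>_def using \<delta> by (simp add: field_simps mult_left_le_one_le)
  have M: "2 * \<kappa> \<le> real M" "real M \<le> 2 * \<kappa> + 1"
    unfolding M_def using k_\<kappa> by linarith+
  have M_large: "2 * real k \<le> \<delta> * real M"
    using M(1) \<delta> unfolding \<kappa>_def by (simp add: field_simps)
  have "k \<le> M" using M(1) k_\<kappa> by linarith
  have m_bound: "real (2 * M) \<le> 6 * \<kappa>" using M(2) k k_\<kappa> by simp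
  have "real (2 * M + k) \<le> 7 * \<kappa>" using M(2) k k_\<kappa> by simp
  also have "7 * \<kappa> \<le> 14 * real d * real a / \<delta>" unfolding \<kappa>_def k_def by simp
  finally have L: "real (2 * M + k) \<le> 14 * real d * real a / \<delta>" .
  have "2 * (\<Sum>i\<le>d. (2 * M + k) choose i) < 2 ^ k"
    using twice_sum_binomial_lt_pow2[OF \<delta>(1) d _ a(1,2) L] k(2) unfolding k_def by simp
  then have "2 * (3 * M choose (2 * M + k)) * (\<Sum>i\<le>d. (2 * M + k) choose i) < 3 * M choose (2 * M)"
    by (rule twice_binomial_mult_lt[OF \<open>k \<le> M\<close>])
  moreover have three_M: "3 * M = 2 * M + M" by simp
  ultimately have ratio:
    "2 * ((2 * M + M) choose (2 * M + k)) * (\<Sum>i\<le>d. (2 * M + k) choose i) < (2 * M + M) choose (2 * M)"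
    by (simp only: three_M)
  have "9 * 1 \<le> a * d" using a(1) d by (rule mult_le_mono)
  then have "18 \<le> k" unfolding k_def by simp
  then have "8 \<le> \<delta> * real M" using M_large by simp
  moreover have "real (2 * M) \<le> 168 * (real d / \<delta>) * ln (2 / \<delta>)"
  proof -
    have "real (2 * M) \<le> 12 * real d * real a / \<delta>" using m_bound unfolding \<kappa>_def k_def by simp
    also have "\<dots> \<le> 12 * real d * (14 * ln (2 / \<delta>)) / \<delta>"
      using a(3) \<delta> by (intro divide_right_mono mult_left_mono) auto
    finally show ?thesis by simp
  qed
  ultimately show thesis
    using that[of M k "2 * M"] ratio M_large by simp
qed

lemma domination_number_le: "dominating T X \<Longrightarrow> domination_number T \<le> card X"
  unfolding domination_number_def by (rule Least_le) blast

theorem theorem1p6: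
  shows "\<exists>C::real. C > 0 \<and>
    (\<forall>(\<delta>::real) (d::nat) (T::nat trigraph).
        0 < \<delta> \<and> \<delta> \<le> 1 \<and> d \<ge> 1 \<and> is_trigraph T
        \<and> min_degree_ge T (\<delta> * real (card (verts T)))
        \<and> vc_dim_le T d
      \<longrightarrow> real (domination_number T) \<le> C * (real d / \<delta>) * ln (2 / \<delta>))"
proof (intro exI[of _ 168] conjI allI impI)
  show "(168::real) > 0" by simp
  fix \<delta> :: real and d :: nat and T :: "nat trigraph"
  assume "0 < \<delta> \<and> \<delta> \<le> 1 \<and> d \<ge> 1 \<and> is_trigraph T
    \<and> min_degree_ge T (\<delta> * real (card (verts T))) \<and> vc_dim_le T d"
  then have \<delta>: "0 < \<delta>" "\<delta> \<le> 1" and d: "1 \<le> d" and T: "is_trigraph T"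
    and mindeg: "min_degree_ge T (\<delta> * real (card (verts T)))" and vc: "vc_dim_le T d"
    by auto
  obtain m M k :: nat where "8 \<le> \<delta> * real M" "real k \<le> \<delta> * real M / 2"
    and "2 * ((m + M) choose (m + k)) * (\<Sum>i\<le>d. (m + k) choose i) < (m + M) choose m"
    and m: "real m \<le> 168 * (real d / \<delta>) * ln (2 / \<delta>)"
    using dominating_parameters[OF \<delta> d] .
  then obtain X where "dominating T X" "card X \<le> m"
    using exists_small_dominating_set[OF T mindeg vc] by blast
  then have "domination_number T \<le> m"
    using domination_number_le by fastforce
  then show "real (domination_number T) \<le> 168 * (real d / \<delta>) * ln (2 / \<delta>)"
    using m by linarith
qed

end
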